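(* For every $x>0$, $$\frac{L(x,1)^2-G(x,1)^2}{2L(x,1)^2}\le \frac{A(x,1)-L(x,1)}{L(x,1)}\le \log K(x).$$
   Context: $A(x,1)=\frac{x+1}{2}$, $G(x,1)=\sqrt{x}$, $L(x,1)=\frac{x-1}{\log x}$ for $x\ne1$ and $L(1,1)=1$, and $K(x)=\frac{(x+1)^2}{4x}$. *)

theory Defs
  imports Complex_Main
begin

definition AM :: "real \<Rightarrow> real" where "AM x = (x + 1) / 2"
definition GM :: "real \<Rightarrow> real" where "GM x = sqrt x"
definition LM :: "real \<Rightarrow> real" where "LM x = (if x = 1 then 1 else (x - 1) / ln x)"
definition KF :: "real \<Rightarrow> real" where "KF x = (x + 1)^2 / (4 * x)"

end

theory Submission
  imports Defs
begin

text \<open>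
  Both inequalities come down to the sign of \<open>(x - 1) g(x)\<close> for a function \<open>g\<close> that
  vanishes at 1 and is nondecreasing on \<open>(0, \<infinity>)\<close>. For the left one, with \<open>t = \<surd>x\<close>,
  \<open>g(t) = ln t - 3(t\<^sup>2 - 1)/(t\<^sup>2 + 4t + 1)\<close> yields the Polya-Szego bound
  \<open>3L \<le> 2G + A\<close>; together with \<open>G \<le> A\<close> this places \<open>L\<close> below the positive root of
  \<open>3L\<^sup>2 - 2AL - G\<^sup>2\<close>, which is the claim. For the right one,
  \<open>g(x) = (x - 1)/(x + 1) (1 + ln K(x)) - (ln x)/2\<close> has derivative
  \<open>(4x ln K(x) + (x - 1)\<^sup>2) / (2x(x + 1)\<^sup>2)\<close>, which is nonnegative since \<open>K \<ge> 1\<close>.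
\<close>

lemma sign_of_nondecreasing_root:
  fixes g g' :: "real \<Rightarrow> real"
  assumes "\<And>y. y > 0 \<Longrightarrow> (g has_real_derivative g' y) (at y)"
    and "\<And>y. y > 0 \<Longrightarrow> g' y \<ge> 0"
    and "g a = 0" "a > 0" "t > 0"
  shows "(t - a) * g t \<ge> 0"
proof (cases "a \<le> t")
  case True
  have "g a \<le> g t"
    by (rule deriv_nonneg_imp_mono[of a t g g']) (use assms True in auto)
  then show ?thesis using True assms(3) by simp
next
  case False
  have "g t \<le> g a"
    by (rule deriv_nonneg_imp_mono[of t a g g']) (use assms False in auto)
  then show ?thesis using False assms(3) by (simp add: mult_nonpos_nonpos)
qed

lemma diff_one_mult_ln_pos:
  fixes x :: real
  assumes "x > 0" "x \<noteq> 1"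
  shows "(x - 1) * ln x > 0"
  using assms by (cases "x < 1") (auto simp: mult_neg_neg)

lemma LM_pos: "x > 0 \<Longrightarrow> LM x > 0"
  using diff_one_mult_ln_pos[of x] by (auto simp: LM_def zero_less_mult_iff zero_less_divide_iff)

lemma GM_le_AM: "x \<ge> 0 \<Longrightarrow> GM x \<le> AM x"
  using arith_geo_mean_sqrt[of x 1] by (simp add: GM_def AM_def)

lemma ln_sign_Polya_Szego:
  fixes t :: real
  assumes "t > 0"
  shows "(t - 1) * (ln t * (t\<^sup>2 + 4*t + 1) - 3 * (t\<^sup>2 - 1)) \<ge> 0"
proof -
  define D where "D t = t\<^sup>2 + 4*t + 1" for t :: real
  have D_pos: "D t > 0" if "t > 0" for t
    using that by (simp add: D_def add_pos_pos)
  have "(t - 1) * (ln t - 3 * (t\<^sup>2 - 1) / D t) \<ge> 0"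
  proof (rule sign_of_nondecreasing_root[where g' = "\<lambda>t. (t - 1)^4 / (t * (D t)\<^sup>2)"])
    fix y :: real assume y: "y > 0"
    have "((\<lambda>t. ln t - 3 * (t\<^sup>2 - 1) / D t) has_real_derivative
           1 / y - 3 * (2*y * D y - (y\<^sup>2 - 1) * (2*y + 4)) / (D y)\<^sup>2) (at y)"
      using y D_pos[OF y] unfolding D_def
      by (auto intro!: derivative_eq_intros simp: power2_eq_square)
    moreover have "1 / y - 3 * (2*y * D y - (y\<^sup>2 - 1) * (2*y + 4)) / (D y)\<^sup>2
                   = (y - 1)^4 / (y * (D y)\<^sup>2)"
      using y D_pos[OF y] unfolding D_def
      by (simp add: field_simps) (simp add: algebra_simps power2_eq_square power4_eq_xxxx)
    ultimately show "((\<lambda>t. ln t - 3 * (t\<^sup>2 - 1) / D t) has_real_derivative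
                      (y - 1)^4 / (y * (D y)\<^sup>2)) (at y)"
      by simp
  qed (use assms in auto)
  then have "0 \<le> D t * ((t - 1) * (ln t - 3 * (t\<^sup>2 - 1) / D t))"
    using D_pos[OF assms] by simp
  also have "\<dots> = (t - 1) * (ln t * D t - 3 * (t\<^sup>2 - 1))"
    using D_pos[OF assms] by (simp add: field_simps)
  finally show ?thesis by (simp add: D_def)
qed

lemma LM_le_Polya_Szego:
  fixes x :: real
  assumes "x > 0"
  shows "3 * LM x \<le> 2 * GM x + AM x"
proof (cases "x = 1")
  case True
  then show ?thesis by (simp add: LM_def GM_def AM_def)
next
  case False
  define t where "t = sqrt x"
  have t: "t > 0" "x = t\<^sup>2" "ln x = 2 * ln t"
    using assms by (auto simp: t_def ln_sqrt)
  have pos: "(x - 1) * ln x > 0"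
    using diff_one_mult_ln_pos[OF assms False] .
  have "0 \<le> 2 * (t + 1) * ((t - 1) * (ln t * (t\<^sup>2 + 4*t + 1) - 3 * (t\<^sup>2 - 1)))"
    using ln_sign_Polya_Szego[OF t(1)] t(1) by simp
  also have "\<dots> = (x - 1) * ln x * (t\<^sup>2 + 4*t + 1) - 6 * (x - 1)\<^sup>2"
    unfolding t(3) unfolding t(2) by (simp add: algebra_simps power2_eq_square)
  also have "(x - 1)\<^sup>2 = LM x * ((x - 1) * ln x)"
    using pos False by (auto simp: LM_def power2_eq_square)
  finally have "6 * LM x * ((x - 1) * ln x) \<le> (t\<^sup>2 + 4*t + 1) * ((x - 1) * ln x)"
    by (simp add: algebra_simps)
  then have "6 * LM x \<le> t\<^sup>2 + 4*t + 1"
    using pos by (meson mult_le_cancel_right_pos)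
  moreover have "GM x = t" "AM x = (t\<^sup>2 + 1) / 2"
    using t(2) by (simp_all add: GM_def AM_def t_def)
  ultimately show ?thesis
    by simp
qed

lemma half_sq_gap_le_rel_gap:
  fixes L G A :: real
  assumes "L > 0" "0 \<le> G" "G \<le> A" "3 * L \<le> 2 * G + A"
  shows "(L\<^sup>2 - G\<^sup>2) / (2 * L\<^sup>2) \<le> (A - L) / L"
proof -
  have "3 * L\<^sup>2 \<le> (2 * G + A) * L"
    using assms(1,4) by (simp add: power2_eq_square mult_right_mono)
  moreover have "(2 * G - A) * L \<le> G\<^sup>2"
  proof (cases "2 * G - A \<ge> 0")
    case True
    have "(2 * G - A) * (3 * L) \<le> (2 * G - A) * (2 * G + A)"
      using assms(4) True by (simp add: mult_left_mono)
    moreover have "G\<^sup>2 \<le> A\<^sup>2"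
      using assms(2,3) by (simp add: power_mono)
    ultimately show ?thesis
      by (simp add: algebra_simps power2_eq_square)
  next
    case False
    then show ?thesis
      using assms(1) by (smt (verit) mult_nonpos_nonneg zero_le_power2)
  qed
  ultimately have "L * (L\<^sup>2 - G\<^sup>2) \<le> L * (2 * L * (A - L))"
    using assms(1) by (intro mult_left_mono) (auto simp: algebra_simps power2_eq_square)
  then show ?thesis
    using assms(1) by (simp add: field_simps power2_eq_square)
qed

lemma KF_ge_one: "x > 0 \<Longrightarrow> KF x \<ge> 1"
  using zero_le_power2[of "x - 1"] by (simp add: KF_def power2_eq_square algebra_simps)

lemma has_real_derivative_ln_KF:
  fixes x :: real
  assumes "x > 0"
  shows "((\<lambda>x. ln (KF x)) has_real_derivative 2 / (x + 1) - 1 / x) (at x)"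
proof -
  have "(KF has_real_derivative (x\<^sup>2 - 1) / (4 * x\<^sup>2)) (at x)"
    unfolding KF_def using assms
    by (auto intro!: derivative_eq_intros simp: field_simps power2_eq_square)
  moreover have "KF x > 0"
    using KF_ge_one[OF assms] by simp
  ultimately have "((\<lambda>x. ln (KF x)) has_real_derivative (x\<^sup>2 - 1) / (4 * x\<^sup>2) / KF x) (at x)"
    by (auto intro!: derivative_eq_intros)
  moreover have "(x\<^sup>2 - 1) / (4 * x\<^sup>2) / KF x = 2 / (x + 1) - 1 / x"
  proof -
    have "x \<noteq> 0" "x + 1 > 0" using assms by simp_all
    then show ?thesis
      unfolding KF_def by (simp add: divide_simps) (simp add: algebra_simps power2_eq_square)
  qed
  ultimately show ?thesis
    by simp
qed

lemma ln_KF_sign: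
  fixes x :: real
  assumes "x > 0"
  shows "(x - 1) * ((x - 1) / (x + 1) * (1 + ln (KF x)) - ln x / 2) \<ge> 0"
proof (rule sign_of_nondecreasing_root
    [where g' = "\<lambda>y. (4 * y * ln (KF y) + (y - 1)\<^sup>2) / (2 * y * (y + 1)\<^sup>2)"])
  fix y :: real assume y: "y > 0"
  have y1: "y + 1 \<noteq> 0" using y by simp
  define lnK where "lnK = (\<lambda>x. ln (KF x))"
  have lnK_deriv: "(lnK has_real_derivative 2 / (y + 1) - 1 / y) (at y)"
    unfolding lnK_def by (rule has_real_derivative_ln_KF[OF y])
  have "((\<lambda>x. (x - 1) / (x + 1) * (1 + lnK x) - ln x / 2) has_real_derivative
         2 / (y + 1)\<^sup>2 * (1 + lnK y) + (y - 1) / (y + 1) * (2 / (y + 1) - 1 / y) - 1 / (2 * y))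
         (at y)"
    using y y1 by (auto intro!: derivative_eq_intros lnK_deriv)
                  (simp add: divide_simps, simp add: algebra_simps power2_eq_square)
  moreover have "2 / (y + 1)\<^sup>2 * (1 + lnK y) + (y - 1) / (y + 1) * (2 / (y + 1) - 1 / y) - 1 / (2 * y)
                 = (4 * y * lnK y + (y - 1)\<^sup>2) / (2 * y * (y + 1)\<^sup>2)"
    using y y1 by (simp add: divide_simps) (simp add: algebra_simps power2_eq_square)
  ultimately show "((\<lambda>x. (x - 1) / (x + 1) * (1 + ln (KF x)) - ln x / 2) has_real_derivative
                    (4 * y * ln (KF y) + (y - 1)\<^sup>2) / (2 * y * (y + 1)\<^sup>2)) (at y)"
    by (simp add: lnK_def)
  show "0 \<le> (4 * y * ln (KF y) + (y - 1)\<^sup>2) / (2 * y * (y + 1)\<^sup>2)"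
    using y KF_ge_one[OF y] by simp
qed (use assms in \<open>auto simp: KF_def\<close>)

lemma AM_div_LM_le:
  fixes x :: real
  assumes "x > 0"
  shows "AM x / LM x \<le> 1 + ln (KF x)"
proof (cases "x = 1")
  case True
  then show ?thesis by (simp add: AM_def LM_def KF_def)
next
  case False
  have coeff_pos: "(x - 1)\<^sup>2 / (x + 1) > 0"
    using assms False by simp
  have nz: "x - 1 \<noteq> 0" "x + 1 \<noteq> 0" "ln x \<noteq> 0"
    using assms False by auto
  have "AM x / LM x = (x + 1) * ln x / (2 * (x - 1))"
    using False by (simp add: AM_def LM_def)
  then have "(x - 1)\<^sup>2 / (x + 1) * (AM x / LM x)
             = (x - 1)\<^sup>2 / (x + 1) * ((x + 1) * ln x / (2 * (x - 1)))"
    by simp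
  also have "\<dots> = (x - 1) * ln x / 2"
    using nz by (simp add: divide_simps power2_eq_square)
  also have "\<dots> \<le> (x - 1)\<^sup>2 / (x + 1) * (1 + ln (KF x))"
    using ln_KF_sign[OF assms] by (simp add: algebra_simps power2_eq_square)
  finally show ?thesis
    using coeff_pos by (meson mult_le_cancel_left_pos)
qed

theorem lemma3p2:
  fixes x :: real
  assumes "x > 0"
  shows "(LM x ^ 2 - GM x ^ 2) / (2 * LM x ^ 2) \<le> (AM x - LM x) / LM x
         \<and> (AM x - LM x) / LM x \<le> ln (KF x)"
proof
  show "(LM x ^ 2 - GM x ^ 2) / (2 * LM x ^ 2) \<le> (AM x - LM x) / LM x"
    using assms by (intro half_sq_gap_le_rel_gap LM_pos GM_le_AM LM_le_Polya_Szego)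
                   (auto simp: GM_def)
  have "(AM x - LM x) / LM x = AM x / LM x - 1"
    using LM_pos[OF assms] by (simp add: diff_divide_distrib)
  then show "(AM x - LM x) / LM x \<le> ln (KF x)"
    using AM_div_LM_le[OF assms] by simp
qed

end
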